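(* Let $\kappa$ be a cardinal with $\mathrm{cf}(\kappa) > \omega$, let $\mathcal{A}$ and $\mathcal{B}$ be almost disjoint families on $\omega$ of size $\kappa$, and let $h : \mathcal{A} \to \mathcal{B}$ be a bijection of dense oscillation. Then there is no homeomorphism from $\Psi(\mathcal{A})$ onto $\Psi(\mathcal{B})$ that extends $h$.
   Context: An almost disjoint (AD) family on $\omega$ is a family of infinite subsets of $\omega$ any two distinct members of which have finite intersection. For an AD family $\mathcal{A}$, the space $\Psi(\mathcal{A})$ has underlying set $\omega \cup \mathcal{A}$; points of $\omega$ are isolated, and basic neighborhoods of a point $x \in \mathcal{A}$ are the sets $\{x\} \cup (x \setminus F)$ with $F \subseteq \omega$ finite. For AD families $\mathcal{A}, \mathcal{B}$ of size $\kappa$, a bijection $h : \mathcal{A} \to \mathcal{B}$ is of dense oscillation if for every $\mathcal{A}' \subseteq \mathcal{A}$ with $|\mathcal{A}'| = \kappa$ there are $x, y, z \in \mathcal{A}'$ such that $|(x \cap z) \setminus (x \cap y)| \neq |(h(x) \cap h(z)) \setminus (h(x) \cap h(y))|$. *)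

theory Defs
  imports "HOL-Analysis.Analysis"
begin

definition AD_family :: "nat set set \<Rightarrow> bool" where
  "AD_family \<A> \<longleftrightarrow> (\<forall>x\<in>\<A>. infinite x) \<and> (\<forall>x\<in>\<A>. \<forall>y\<in>\<A>. x \<noteq> y \<longrightarrow> finite (x \<inter> y))"

text \<open>cf(|A|) > omega: every cofinal subset of the initial well-order |A| is uncountable
  (cf of a cardinal = least size of a cofinal subset).\<close>
definition uncountable_cof :: "'a set \<Rightarrow> bool" where
  "uncountable_cof A \<longleftrightarrow>
     (\<forall>X. X \<subseteq> A \<and> (\<forall>a\<in>A. \<exists>x\<in>X. (a, x) \<in> card_of A) \<longrightarrow> uncountable X)"

definition dense_oscillation :: "nat set set \<Rightarrow> (nat set \<Rightarrow> nat set) \<Rightarrow> bool" where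
  "dense_oscillation \<A> h \<longleftrightarrow>
     (\<forall>\<A>'. \<A>' \<subseteq> \<A> \<and> (card_of \<A>', card_of \<A>) \<in> ordIso \<longrightarrow>
        (\<exists>x\<in>\<A>'. \<exists>y\<in>\<A>'. \<exists>z\<in>\<A>'.
           (card_of ((x \<inter> z) - (x \<inter> y)), card_of ((h x \<inter> h z) - (h x \<inter> h y))) \<notin> ordIso))"

text \<open>Psi-space: points of omega are Inl n, points of A are Inr a.\<close>
definition psi_carrier :: "nat set set \<Rightarrow> (nat + nat set) set" where
  "psi_carrier \<A> = range Inl \<union> Inr ` \<A>"

definition psi_open :: "nat set set \<Rightarrow> (nat + nat set) set \<Rightarrow> bool" where
  "psi_open \<A> U \<longleftrightarrow> U \<subseteq> psi_carrier \<A> \<and>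
     (\<forall>a\<in>\<A>. Inr a \<in> U \<longrightarrow> (\<exists>F. finite F \<and> Inl ` (a - F) \<subseteq> U))"

lemma istopology_psi_open: "istopology (psi_open \<A>)"
  unfolding istopology_def
proof (intro conjI allI impI)
  fix S T assume S: "psi_open \<A> S" and T: "psi_open \<A> T"
  show "psi_open \<A> (S \<inter> T)"
    unfolding psi_open_def
  proof (intro conjI ballI impI)
    show "S \<inter> T \<subseteq> psi_carrier \<A>" using S unfolding psi_open_def by (simp add: le_infI1)
  next
    fix a assume a: "a \<in> \<A>" "Inr a \<in> S \<inter> T"
    have "\<exists>F. finite F \<and> Inl ` (a - F) \<subseteq> S" using S a unfolding psi_open_def by simp
    then obtain F where F: "finite F" "Inl ` (a - F) \<subseteq> S" by (elim exE conjE)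
    have "\<exists>G. finite G \<and> Inl ` (a - G) \<subseteq> T" using T a unfolding psi_open_def by simp
    then obtain G where G: "finite G" "Inl ` (a - G) \<subseteq> T" by (elim exE conjE)
    have "Inl ` (a - (F \<union> G)) \<subseteq> S \<inter> T" using F(2) G(2) by (simp add: image_subset_iff)
    then show "\<exists>F. finite F \<and> Inl ` (a - F) \<subseteq> S \<inter> T"
      using F(1) G(1) by (intro exI[of _ "F \<union> G"]) simp
  qed
next
  fix K assume K: "\<forall>S\<in>K. psi_open \<A> S"
  show "psi_open \<A> (\<Union>K)"
    unfolding psi_open_def
  proof (intro conjI ballI impI)
    show "\<Union>K \<subseteq> psi_carrier \<A>" using K unfolding psi_open_def by (simp add: Union_least)
  next
    fix a assume "a \<in> \<A>" "Inr a \<in> \<Union>K"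
    then obtain S where "S \<in> K" "Inr a \<in> S" by blast
    have "\<exists>F. finite F \<and> Inl ` (a - F) \<subseteq> S"
      using K \<open>S \<in> K\<close> \<open>Inr a \<in> S\<close> \<open>a \<in> \<A>\<close> unfolding psi_open_def by simp
    then obtain F where F: "finite F" "Inl ` (a - F) \<subseteq> S" by (elim exE conjE)
    have "Inl ` (a - F) \<subseteq> \<Union>K" using F(2) \<open>S \<in> K\<close> by (rule subset_trans[OF _ Union_upper])
    then show "\<exists>F. finite F \<and> Inl ` (a - F) \<subseteq> \<Union>K" using F(1) by (intro exI[of _ F]) simp
  qed
qed

definition Psi :: "nat set set \<Rightarrow> (nat + nat set) topology" where
  "Psi \<A> = topology (psi_open \<A>)"

lemma openin_Psi: "openin (Psi \<A>) U \<longleftrightarrow> psi_open \<A> U"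
  unfolding Psi_def using istopology_psi_open by (simp add: topology_inverse')

end

theory Submission
  imports Defs "HOL-Library.Countable_Set_Type" "HOL-Library.Infinite_Set"
begin

(* A homeomorphism f from Psi(A) onto Psi(B) maps the isolated points, i.e. omega, onto themselves,
   so it induces a permutation g of omega. Continuity and openness of f at a point a of A show
   that g maps a onto h(a) up to finite sets, hence g[a - n_a] = h(a) - g[n_a] for some cut n_a.
   The triple (n_a, a \<inter> n_a, h(a) \<inter> g[n_a]) ranges over a countable set, so as cf|A| > omega
   it is constant on a subfamily A' of full size. For x, y, z in A' the parts below the common
   cut cancel, and g is a bijection from (x \<inter> z) - (x \<inter> y) onto (h x \<inter> h z) - (h x \<inter> h y),
   contradicting dense oscillation. *)

unbundle cardinal_syntax

lemma uncountable_cof_imp_uncountable: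
  assumes "uncountable_cof A"
  shows "uncountable A"
proof -
  have "(a, a) \<in> |A|" if "a \<in> A" for a
    using wo_rel.REFL[OF Card_order_wo_rel[OF card_of_Card_order[of A]]] that
    by (auto simp: refl_on_def Field_card_of)
  then have "\<forall>a\<in>A. \<exists>x\<in>A. (a, x) \<in> |A|" by blast
  then show ?thesis using assms unfolding uncountable_cof_def by blast
qed

lemma uncountable_cof_countable_bounded:
  assumes "uncountable_cof A" and "countable X" and "X \<subseteq> A"
  obtains a where "a \<in> A" and "\<And>x. x \<in> X \<Longrightarrow> (x, a) \<in> |A|"
proof -
  obtain a where "a \<in> A" and a: "\<forall>x\<in>X. (a, x) \<notin> |A|"
    using assms unfolding uncountable_cof_def by blast
  moreover have "(x, a) \<in> |A|" if "x \<in> X" for x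
    using wo_rel.TOTALS[OF Card_order_wo_rel[OF card_of_Card_order[of A]]]
      a that \<open>a \<in> A\<close> \<open>X \<subseteq> A\<close>
    by (auto simp: Field_card_of)
  ultimately show thesis using that by blast
qed

lemma card_of_ordLess_underS:
  assumes "|B| <o |A|"
  shows "\<exists>b\<in>A. |B| \<le>o |underS (card_of A) b|"
proof -
  from ordLess_iff_ordIso_Restr[OF card_of_Well_order card_of_Well_order, THEN iffD1, OF assms]
  obtain b where "b \<in> Field |A|" and "( |B|, Restr (card_of A) (underS (card_of A) b)) \<in> ordIso"
    by blast
  then have b: "b \<in> A" and "\<exists>f. bij_betw f B (Field (Restr (card_of A) (underS (card_of A) b)))"
    unfolding ordIso_def iso_def by (auto simp: Field_card_of)
  then obtain f where "bij_betw f B (Field (Restr (card_of A) (underS (card_of A) b)))"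
    by blast
  then have "inj_on f B" and "f ` B \<subseteq> underS (card_of A) b"
    using Field_Restr_subset[of "card_of A" "underS (card_of A) b"] unfolding bij_betw_def by auto
  then have "|B| \<le>o |underS (card_of A) b|" unfolding card_of_ordLeq[symmetric] by blast
  with b show ?thesis by blast
qed

lemma uncountable_cof_not_subset_countable_UNION:
  assumes cof: "uncountable_cof A" and "countable I" and small: "\<And>i. i \<in> I \<Longrightarrow> |P i| <o |A|"
  shows "\<not> A \<subseteq> (\<Union>i\<in>I. P i)"
proof
  \<comment> \<open>Each P i is no larger than the initial segment below some b i; the countably many b i
    have a common upper bound a, so A, a countable union of sets no larger than the proper
    initial segment below a, is either countable or smaller than itself.\<close>
  assume A_sub: "A \<subseteq> (\<Union>i\<in>I. P i)"
  have "\<forall>i\<in>I. \<exists>b. b \<in> A \<and> |P i| \<le>o |underS (card_of A) b|"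
    using small card_of_ordLess_underS by blast
  from bchoice[OF this] obtain b
    where b: "\<forall>i\<in>I. b i \<in> A \<and> |P i| \<le>o |underS (card_of A) (b i)|" ..
  have "countable (b ` I)" and "b ` I \<subseteq> A" using \<open>countable I\<close> b by auto
  then obtain a where a: "a \<in> A" and "\<And>x. x \<in> b ` I \<Longrightarrow> (x, a) \<in> |A|"
    using uncountable_cof_countable_bounded[OF cof] by blast
  then have b_a: "(b i, a) \<in> |A|" if "i \<in> I" for i using that by blast
  define S where "S = underS (card_of A) a"
  have P_S: "|P i| \<le>o |S|" if "i \<in> I" for i
  proof -
    have "underS (card_of A) (b i) \<subseteq> S"
      unfolding S_def
      using wo_rel.TRANS[OF Card_order_wo_rel[OF card_of_Card_order[of A]]]
        wo_rel.ANTISYM[OF Card_order_wo_rel[OF card_of_Card_order[of A]]]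
      by (rule underS_incr[OF _ _ b_a[OF that]])
    with b that show ?thesis using ordLeq_transitive card_of_mono1 by blast
  qed
  show False
  proof (cases "finite S")
    case True
    then have "finite (P i)" if "i \<in> I" for i
      using P_S[OF that] card_of_ordLeq_finite by blast
    then have "countable (\<Union>i\<in>I. P i)"
      using \<open>countable I\<close> by (intro countable_UN) (auto intro: countable_finite)
    then have "countable A" using A_sub countable_subset by blast
    then show False using uncountable_cof_imp_uncountable[OF cof] by blast
  next
    case False
    have "|I| \<le>o |UNIV :: nat set|" using \<open>countable I\<close> by (simp only: countable_card_of_nat)
    also have "|UNIV :: nat set| \<le>o |S|" using False by (simp only: infinite_iff_card_of_nat)
    finally have "|\<Union>i\<in>I. P i| \<le>o |S|"
      using P_S by (intro card_of_UNION_ordLeq_infinite[OF False]) auto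
    then have "|A| \<le>o |S|" using card_of_mono1[OF A_sub] ordLeq_transitive by blast
    moreover have "|S| <o |A|"
      unfolding S_def using card_of_underS[OF card_of_Card_order, of a A] a
      by (simp only: Field_card_of)
    ultimately show False using not_ordLess_ordLeq by blast
  qed
qed

lemma uncountable_cof_fibre_ordIso:
  fixes key :: "'a \<Rightarrow> 'k"
  assumes cof: "uncountable_cof A" and "countable (key ` A)"
  obtains k where "( |{a\<in>A. key a = k}|, |A| ) \<in> ordIso"
proof -
  have "A \<subseteq> (\<Union>k\<in>key ` A. {a\<in>A. key a = k})" by blast
  then obtain k where "\<not> |{a\<in>A. key a = k}| <o |A|"
    using uncountable_cof_not_subset_countable_UNION[OF cof \<open>countable (key ` A)\<close>,
        of "\<lambda>k. {a\<in>A. key a = k}"]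
    by blast
  moreover have "|{a\<in>A. key a = k}| \<le>o |A|" for k by (rule card_of_mono1) blast
  ultimately show thesis using that ordLeq_iff_ordLess_or_ordIso by blast
qed

lemma topspace_Psi: "topspace (Psi \<A>) = psi_carrier \<A>"
proof
  show "topspace (Psi \<A>) \<subseteq> psi_carrier \<A>"
    using openin_topspace[of "Psi \<A>"] unfolding openin_Psi psi_open_def by blast
  have "psi_open \<A> (psi_carrier \<A>)"
    unfolding psi_open_def psi_carrier_def by (auto intro!: exI[of _ "{}"])
  then show "psi_carrier \<A> \<subseteq> topspace (Psi \<A>)"
    using openin_subset[of "Psi \<A>"] unfolding openin_Psi by blast
qed

lemma openin_Psi_Inl: "openin (Psi \<A>) {Inl n}"
  unfolding openin_Psi psi_open_def psi_carrier_def by auto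

lemma openin_Psi_Inr_nbhd:
  assumes "a \<in> \<A>"
  shows "openin (Psi \<A>) (insert (Inr a) (Inl ` a))"
  unfolding openin_Psi psi_open_def psi_carrier_def using assms by (auto intro!: exI[of _ "{}"])

lemma not_openin_Psi_Inr:
  assumes "a \<in> \<A>" and "infinite a"
  shows "\<not> openin (Psi \<A>) {Inr a}"
proof
  assume "openin (Psi \<A>) {Inr a}"
  then obtain F where "finite F" and "Inl ` (a - F) \<subseteq> {Inr a}"
    using assms(1) unfolding openin_Psi psi_open_def by blast
  then have "a \<subseteq> F" by blast
  with \<open>finite F\<close> \<open>infinite a\<close> show False using finite_subset by blast
qed

lemma homeomorphic_map_Psi_Inl:
  assumes hom: "homeomorphic_map (Psi \<A>) (Psi \<B>) f" and inf: "\<forall>b\<in>\<B>. infinite b"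
  obtains m where "f (Inl n) = Inl m"
proof (cases "f (Inl n)")
  case (Inr b)
  have Inl_n: "{Inl n} \<subseteq> topspace (Psi \<A>)" by (simp add: topspace_Psi psi_carrier_def)
  then have "f (Inl n) \<in> topspace (Psi \<B>)"
    using homeomorphic_imp_surjective_map[OF hom] by blast
  then have "b \<in> \<B>" using Inr by (auto simp: topspace_Psi psi_carrier_def)
  moreover have "openin (Psi \<B>) (f ` {Inl n})"
    using homeomorphic_map_openness[OF hom Inl_n] openin_Psi_Inl by blast
  then have "openin (Psi \<B>) {Inr b}" using Inr by simp
  ultimately show thesis using not_openin_Psi_Inr inf by blast
qed

lemma homeomorphic_map_Psi_bij_nat:
  assumes hom: "homeomorphic_map (Psi \<A>) (Psi \<B>) f"
    and inf_\<A>: "\<forall>a\<in>\<A>. infinite a" and inf_\<B>: "\<forall>b\<in>\<B>. infinite b"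
  obtains g where "bij g" and "\<And>n. f (Inl n) = Inl (g n)"
proof -
  obtain f' where "homeomorphic_maps (Psi \<A>) (Psi \<B>) f f'"
    using hom homeomorphic_map_maps by blast
  then have hom': "homeomorphic_map (Psi \<B>) (Psi \<A>) f'"
    and f'_f: "\<And>n. f' (f (Inl n)) = Inl n" and f_f': "\<And>m. f (f' (Inl m)) = Inl m"
    unfolding homeomorphic_maps_map by (auto simp: topspace_Psi psi_carrier_def)
  define g where "g n = projl (f (Inl n))" for n
  define g' where "g' m = projl (f' (Inl m))" for m
  have g: "f (Inl n) = Inl (g n)" for n
  proof -
    obtain m where "f (Inl n) = Inl m" by (rule homeomorphic_map_Psi_Inl[OF hom inf_\<B>])
    then show ?thesis by (simp add: g_def)
  qed
  have g': "f' (Inl m) = Inl (g' m)" for m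
  proof -
    obtain n where "f' (Inl m) = Inl n" by (rule homeomorphic_map_Psi_Inl[OF hom' inf_\<A>])
    then show ?thesis by (simp add: g'_def)
  qed
  have "g' \<circ> g = id" and "g \<circ> g' = id"
    using f'_f f_f' by (simp_all add: fun_eq_iff g g')
  then have "bij g" by (rule o_bij)
  with g show thesis using that by blast
qed

lemma continuous_map_Psi_finite_image_Diff:
  assumes "continuous_map (Psi \<A>) (Psi \<B>) f" and "\<And>n. f (Inl n) = Inl (g n)"
    and "a \<in> \<A>" and "b \<in> \<B>" and "f (Inr a) = Inr b"
  shows "finite (g ` a - b)"
proof -
  let ?U = "{x \<in> topspace (Psi \<A>). f x \<in> insert (Inr b) (Inl ` b)}"
  have "openin (Psi \<A>) ?U"
    using openin_continuous_map_preimage[OF assms(1) openin_Psi_Inr_nbhd[OF \<open>b \<in> \<B>\<close>]] .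
  moreover have "Inr a \<in> ?U" using assms(3,5) by (simp add: topspace_Psi psi_carrier_def)
  ultimately obtain F where "finite F" and "Inl ` (a - F) \<subseteq> ?U"
    using \<open>a \<in> \<A>\<close> unfolding openin_Psi psi_open_def by blast
  then have "g k \<in> b" if "k \<in> a - F" for k using that by (auto simp: assms(2))
  then have "g ` a - b \<subseteq> g ` F" by blast
  with \<open>finite F\<close> show ?thesis using finite_subset by blast
qed

lemma open_map_Psi_finite_Diff_image:
  assumes "open_map (Psi \<A>) (Psi \<B>) f" and "\<And>n. f (Inl n) = Inl (g n)"
    and "a \<in> \<A>" and "b \<in> \<B>" and "f (Inr a) = Inr b"
  shows "finite (b - g ` a)"
proof -
  have "openin (Psi \<B>) (f ` insert (Inr a) (Inl ` a))"
    using assms(1) openin_Psi_Inr_nbhd[OF \<open>a \<in> \<A>\<close>] unfolding open_map_def by blast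
  moreover have "f ` insert (Inr a) (Inl ` a) = insert (Inr b) (Inl ` g ` a)"
    using assms(2,5) by (auto simp: image_image)
  ultimately have "psi_open \<B> (insert (Inr b) (Inl ` g ` a))" by (simp add: openin_Psi)
  then obtain G where "finite G" and "Inl ` (b - G) \<subseteq> insert (Inr b) (Inl ` g ` a)"
    using \<open>b \<in> \<B>\<close> unfolding psi_open_def by blast
  then have "b - g ` a \<subseteq> G" by auto
  with \<open>finite G\<close> show ?thesis using finite_subset by blast
qed

lemma bij_image_Diff_lessThan_eq:
  fixes g :: "nat \<Rightarrow> 'b"
  assumes "bij g" and "finite (g ` a - b)" and "finite (b - g ` a)"
  shows "\<exists>n. g ` (a - {..<n}) = b - g ` {..<n}"
proof -
  have "finite (g -` ((g ` a - b) \<union> (b - g ` a)))"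
    using assms by (intro finite_vimageI) (auto simp: bij_is_inj)
  then obtain n where n: "g -` ((g ` a - b) \<union> (b - g ` a)) \<subseteq> {..<n}"
    using finite_nat_bounded by blast
  have "k \<in> a \<longleftrightarrow> g k \<in> b" if "n \<le> k" for k
  proof -
    have "k \<notin> {..<n}" using that by simp
    then have "g k \<notin> (g ` a - b) \<union> (b - g ` a)" using n by blast
    then show ?thesis using inj_image_mem_iff[OF bij_is_inj[OF \<open>bij g\<close>]] by blast
  qed
  then have "a - {..<n} = g -` b - {..<n}" by auto
  then have "g ` (a - {..<n}) = g ` g -` b - g ` {..<n}"
    using bij_is_inj[OF \<open>bij g\<close>] by (simp add: image_set_diff)
  also have "\<dots> = b - g ` {..<n}"
    using bij_is_surj[OF \<open>bij g\<close>] by (simp add: surj_image_vimage_eq)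
  finally show ?thesis by blast
qed

lemma inj_image_Int_Diff_Int_eq:
  assumes "inj g"
    and x: "g ` (x - N) = x' - g ` N" and y: "g ` (y - N) = y' - g ` N"
    and z: "g ` (z - N) = z' - g ` N"
    and "x \<inter> N = y \<inter> N" and "x' \<inter> g ` N = y' \<inter> g ` N"
  shows "g ` (x \<inter> z - x \<inter> y) = x' \<inter> z' - x' \<inter> y'"
proof -
  have "x \<inter> z - x \<inter> y = (x - N) \<inter> (z - N) - (y - N)"
    using \<open>x \<inter> N = y \<inter> N\<close> by blast
  then have "g ` (x \<inter> z - x \<inter> y) = g ` (x - N) \<inter> g ` (z - N) - g ` (y - N)"
    using \<open>inj g\<close> by (simp add: image_Int image_set_diff)
  also have "\<dots> = x' \<inter> z' - x' \<inter> y'"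
    unfolding x y z using \<open>x' \<inter> g ` N = y' \<inter> g ` N\<close> by blast
  finally show ?thesis .
qed

lemma homeomorphic_map_Psi_permutation:
  assumes hom: "homeomorphic_map (Psi \<A>) (Psi \<B>) f"
    and inf_\<A>: "\<forall>a\<in>\<A>. infinite a" and inf_\<B>: "\<forall>b\<in>\<B>. infinite b"
    and h: "\<And>a. a \<in> \<A> \<Longrightarrow> h a \<in> \<B>" and f_Inr: "\<And>a. a \<in> \<A> \<Longrightarrow> f (Inr a) = Inr (h a)"
  obtains g n where "bij g" and "\<And>a. a \<in> \<A> \<Longrightarrow> g ` (a - {..<n a}) = h a - g ` {..<n a}"
proof -
  obtain g where "bij g" and f_Inl: "\<And>n. f (Inl n) = Inl (g n)"
    using homeomorphic_map_Psi_bij_nat[OF hom inf_\<A> inf_\<B>] by blast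
  have "\<exists>n. g ` (a - {..<n}) = h a - g ` {..<n}" if "a \<in> \<A>" for a
  proof -
    have "finite (g ` a - h a)"
      using homeomorphic_imp_continuous_map[OF hom] f_Inl that h[OF that] f_Inr[OF that]
      by (rule continuous_map_Psi_finite_image_Diff)
    moreover have "finite (h a - g ` a)"
      using homeomorphic_imp_open_map[OF hom] f_Inl that h[OF that] f_Inr[OF that]
      by (rule open_map_Psi_finite_Diff_image)
    ultimately show ?thesis by (rule bij_image_Diff_lessThan_eq[OF \<open>bij g\<close>])
  qed
  then have "\<forall>a\<in>\<A>. \<exists>n. g ` (a - {..<n}) = h a - g ` {..<n}" by blast
  from bchoice[OF this] obtain n
    where n: "\<forall>a\<in>\<A>. g ` (a - {..<n a}) = h a - g ` {..<n a}" ..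
  show thesis using n by (intro that[OF \<open>bij g\<close>]) blast
qed

lemma uncountable_cof_subfamily_bij_betw_Int_Diff_Int:
  fixes \<A> :: "nat set set" and g :: "nat \<Rightarrow> 'b::countable"
  assumes cof: "uncountable_cof \<A>" and "inj g"
    and n: "\<And>a. a \<in> \<A> \<Longrightarrow> g ` (a - {..<n a}) = h a - g ` {..<n a}"
  obtains \<A>' where "\<A>' \<subseteq> \<A>" and "( |\<A>'|, |\<A>| ) \<in> ordIso"
    and "\<And>x y z. \<lbrakk>x \<in> \<A>'; y \<in> \<A>'; z \<in> \<A>'\<rbrakk> \<Longrightarrow>
      bij_betw g (x \<inter> z - x \<inter> y) (h x \<inter> h z - h x \<inter> h y)"
proof -
  define key where "key a = (n a, a \<inter> {..<n a}, h a \<inter> g ` {..<n a})" for a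
  have "key ` \<A> \<subseteq> UNIV \<times> Collect finite \<times> Collect finite"
    unfolding key_def by (auto intro: finite_Int)
  then have "countable (key ` \<A>)"
    by (rule countable_subset) (intro countable_SIGMA countable_Collect_finite countableI_type)
  then obtain k where k: "( |{a\<in>\<A>. key a = k}|, |\<A>| ) \<in> ordIso"
    using uncountable_cof_fibre_ordIso[OF cof] by blast
  have fibre_bij: "bij_betw g (x \<inter> z - x \<inter> y) (h x \<inter> h z - h x \<inter> h y)"
    if "x \<in> \<A>" "y \<in> \<A>" "z \<in> \<A>" "key x = k" "key y = k" "key z = k" for x y z
  proof -
    have "n y = n x" and "n z = n x" and "x \<inter> {..<n x} = y \<inter> {..<n x}"
      and "h x \<inter> g ` {..<n x} = h y \<inter> g ` {..<n x}"
      using that(4-6) unfolding key_def by auto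
    then have "g ` (x \<inter> z - x \<inter> y) = h x \<inter> h z - h x \<inter> h y"
      using n[OF that(1)] n[OF that(2)] n[OF that(3)]
      by (intro inj_image_Int_Diff_Int_eq[OF \<open>inj g\<close>]) simp_all
    then show ?thesis
      using inj_on_subset[OF \<open>inj g\<close> subset_UNIV] by (simp add: bij_betw_def)
  qed
  show thesis by (rule that[of "{a\<in>\<A>. key a = k}"]) (use k fibre_bij in auto)
qed

theorem proposition8:
  fixes \<A> \<B> :: "nat set set" and h :: "nat set \<Rightarrow> nat set"
  assumes "uncountable_cof \<A>"
    and "AD_family \<A>" and "AD_family \<B>"
    and "(card_of \<B>, card_of \<A>) \<in> ordIso"
    and "bij_betw h \<A> \<B>"
    and "dense_oscillation \<A> h"
  shows "\<not> (\<exists>f. homeomorphic_map (Psi \<A>) (Psi \<B>) f \<and> (\<forall>a\<in>\<A>. f (Inr a) = Inr (h a)))"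
proof
  assume "\<exists>f. homeomorphic_map (Psi \<A>) (Psi \<B>) f \<and> (\<forall>a\<in>\<A>. f (Inr a) = Inr (h a))"
  then obtain f where hom: "homeomorphic_map (Psi \<A>) (Psi \<B>) f"
    and f_Inr: "\<And>a. a \<in> \<A> \<Longrightarrow> f (Inr a) = Inr (h a)" by blast
  have inf_\<A>: "\<forall>a\<in>\<A>. infinite a" and inf_\<B>: "\<forall>b\<in>\<B>. infinite b"
    using assms(2,3) unfolding AD_family_def by blast+
  have h_\<B>: "h a \<in> \<B>" if "a \<in> \<A>" for a using assms(5) that by (simp add: bij_betwE)
  obtain g n where "bij g" and n: "\<And>a. a \<in> \<A> \<Longrightarrow> g ` (a - {..<n a}) = h a - g ` {..<n a}"
    using homeomorphic_map_Psi_permutation[OF hom inf_\<A> inf_\<B> h_\<B> f_Inr] by blast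
  obtain \<A>' where "\<A>' \<subseteq> \<A>" and "( |\<A>'|, |\<A>| ) \<in> ordIso"
    and bij: "\<And>x y z. \<lbrakk>x \<in> \<A>'; y \<in> \<A>'; z \<in> \<A>'\<rbrakk> \<Longrightarrow>
      bij_betw g (x \<inter> z - x \<inter> y) (h x \<inter> h z - h x \<inter> h y)"
    using uncountable_cof_subfamily_bij_betw_Int_Diff_Int[OF assms(1) bij_is_inj[OF \<open>bij g\<close>] n]
    by blast
  then obtain x y z where xyz: "x \<in> \<A>'" "y \<in> \<A>'" "z \<in> \<A>'"
    and osc: "( |x \<inter> z - x \<inter> y|, |h x \<inter> h z - h x \<inter> h y| ) \<notin> ordIso"
    using assms(6) unfolding dense_oscillation_def by blast
  have "bij_betw g (x \<inter> z - x \<inter> y) (h x \<inter> h z - h x \<inter> h y)" using xyz by (rule bij)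
  then show False using osc card_of_ordIso by blast
qed

end
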